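(* Let $A$ be an $n\times n$ (real or complex) matrix and let $\sigma_1,\ldots,\sigma_{ns}$ be scalars such that each shifted matrix $A-\sigma_i I$ is nonsingular. Suppose that for each $i=1,\ldots,ns$ we have a current approximate solution $\tilde x_{0,i}$ to a shifted system, so that the remaining problem is $(A-\sigma_i I)(x_i-\tilde x_{0,i}) = r_{0,i}$, where the residuals satisfy $r_{0,i}=\beta_i r_{0,1}$ for scalars $\beta_i$, $i=2,\ldots,ns$ (and $\beta_1=1$). Let $z_1,\ldots,z_k$ be eigenvectors of $A$ and let $Z_k$ be the $n\times k$ matrix with columns $z_1,\ldots,z_k$. For each $i$, perform the minimum residual (minres) projection of the $i$-th system over $\mathrm{Span}\{z_1,\ldots,z_k\}$: choose $d_i$ minimizing $\|r_{0,i}-(A-\sigma_i I)Z_k d_i\|_2$, and set the new approximate solution $\tilde x_{0,i}+Z_k d_i$ with new residual $r_i = r_{0,i}-(A-\sigma_i I)Z_k d_i$. Then the new residual vectors $r_1,\ldots,r_{ns}$ are all scalar multiples of one another (they are parallel).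
   Context: This concerns solving multiply shifted linear systems $(A-\sigma_i I)x_i=b$ with a common right-hand side; $\|\cdot\|_2$ is the Euclidean norm. The minres projection over a subspace spanned by the columns of a matrix $W$ for the system $(A-\sigma I)(x-\tilde x_0)=r_0$ replaces $\tilde x_0$ by $\tilde x_0+Wd$ where $d$ minimizes $\|r_0-(A-\sigma I)Wd\|_2$. *)

theory Defs
  imports "HOL-Analysis.Analysis"
begin

text \<open>Scalars range over a field with a Euclidean-type norm; the instances of interest
  are \<open>real\<close> and \<open>complex\<close>. On \<open>'a^'n\<close> the norm is the Euclidean (2-)norm.\<close>

definition eigenvector :: "'a::field^'n^'n \<Rightarrow> 'a^'n \<Rightarrow> bool" where
  "eigenvector A z \<longleftrightarrow> z \<noteq> 0 \<and> (\<exists>c. A *v z = c *s z)"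

definition minres_coeff ::
  "'a::{real_normed_field,real_inner}^'n^'n \<Rightarrow> 'a \<Rightarrow> 'a^'k^'n \<Rightarrow> 'a^'n \<Rightarrow> 'a^'k \<Rightarrow> bool" where
  "minres_coeff A \<sigma> W r0 d \<longleftrightarrow>
     (\<forall>e. norm (r0 - ((A - mat \<sigma>) ** W) *v d) \<le> norm (r0 - ((A - mat \<sigma>) ** W) *v e))"

definition parallel :: "'a::field^'n \<Rightarrow> 'a^'n \<Rightarrow> bool" where
  "parallel u v \<longleftrightarrow> (\<exists>c. u = c *s v) \<or> (\<exists>c. v = c *s u)"

end

theory Submission
  imports Defs
begin

text \<open>If the columns of \<open>Z\<close> are eigenvectors of \<open>A\<close> and no shift is an eigenvalue, then
  every \<open>(A - \<sigma> I) Z\<close> has the same range as \<open>Z\<close>. Hence each minres projection is the best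
  approximation of \<open>r\<^sub>0\<^sub>,\<^sub>i\<close> from one and the same subspace. Best approximation from a convex
  set is unique (parallelogram law) and commutes with scaling, so \<open>r\<^sub>0\<^sub>,\<^sub>i = \<beta>\<^sub>i r\<^sub>0\<^sub>,\<^sub>1\<close>
  forces \<open>r\<^sub>i = \<beta>\<^sub>i r\<^sub>1\<close>.\<close>

lemma norm_vector_scalar_mult:
  fixes x :: "'a::real_normed_div_algebra^'n"
  shows "norm (c *s x) = norm c * norm x"
  unfolding norm_vec_def by (simp add: norm_mult L2_set_right_distrib)

lemma mat_matrix_vector_mult:
  fixes x :: "'a::semiring_1^'n"
  shows "mat c *v x = c *s x"
  by (simp add: vec_eq_iff matrix_vector_mult_def mat_def if_distrib if_distribR cong del: if_weak_cong)

lemma parallel_scalar_mult: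
  fixes v :: "'a::field^'n"
  shows "parallel (a *s v) (b *s v)"
proof (cases "b = 0")
  case True
  then have "b *s v = 0 *s (a *s v)" by simp
  then show ?thesis unfolding parallel_def by blast
next
  case False
  then have "a *s v = (a / b) *s (b *s v)" by (simp add: vector_smult_assoc)
  then show ?thesis unfolding parallel_def by blast
qed

lemma best_approximation_unique:
  fixes a x y :: "'v::real_inner"
  assumes "convex S" and "x \<in> S" and "y \<in> S"
    and x_best: "\<forall>z\<in>S. norm (a - x) \<le> norm (a - z)"
    and "\<forall>z\<in>S. norm (a - y) \<le> norm (a - z)"
  shows "x = y"
proof -
  define u where "u = a - x"
  define v where "v = a - y"
  have "norm u = norm v"
    using assms unfolding u_def v_def by (meson antisym)
  have "(1/2) *\<^sub>R x + (1/2) *\<^sub>R y \<in> S"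
    using convexD[OF assms(1-3)] by simp
  moreover have "a - ((1/2) *\<^sub>R x + (1/2) *\<^sub>R y) = (1/2) *\<^sub>R (u + v)"
    unfolding u_def v_def by (simp add: algebra_simps flip: scaleR_add_left)
  ultimately have "norm u \<le> norm ((1/2) *\<^sub>R (u + v))"
    using x_best unfolding u_def by metis
  then have "(2 * norm u)\<^sup>2 \<le> (norm (u + v))\<^sup>2"
    by (intro power_mono) auto
  then have "4 * (norm u)\<^sup>2 \<le> (norm (u + v))\<^sup>2"
    by (simp add: power_mult_distrib)
  moreover have "(norm (u + v))\<^sup>2 + (norm (u - v))\<^sup>2 = 2 * (norm u)\<^sup>2 + 2 * (norm v)\<^sup>2"
    by (simp add: power2_norm_eq_inner inner_add inner_diff inner_commute)
  ultimately have "(norm (u - v))\<^sup>2 \<le> 0"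
    unfolding \<open>norm u = norm v\<close> by linarith
  then have "u - v = 0" by simp
  then show ?thesis unfolding u_def v_def by simp
qed

lemma best_approximation_scalar_mult:
  fixes r w :: "'a::real_normed_field^'n"
  assumes cone: "\<And>c z. z \<in> S \<Longrightarrow> c *s z \<in> S"
    and best: "\<forall>z\<in>S. norm (r - w) \<le> norm (r - z)"
    and "z \<in> S"
  shows "norm (c *s r - c *s w) \<le> norm (c *s r - z)"
proof (cases "c = 0")
  case False
  have "norm (c *s r - c *s w) = norm c * norm (r - w)"
    by (simp flip: vector_ssub_ldistrib norm_vector_scalar_mult)
  also have "\<dots> \<le> norm c * norm (r - inverse c *s z)"
    using best cone[OF \<open>z \<in> S\<close>] by (simp add: mult_left_mono)
  also have "\<dots> = norm (c *s (r - inverse c *s z))"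
    by (simp only: norm_vector_scalar_mult)
  also have "c *s (r - inverse c *s z) = c *s r - z"
    using False by (simp add: vector_ssub_ldistrib vector_smult_assoc)
  finally show ?thesis .
qed simp

lemma invertible_shift_not_eigenvalue:
  fixes A :: "'a::field^'n^'n"
  assumes "invertible (A - mat \<sigma>)" and "z \<noteq> 0" and "A *v z = c *s z"
  shows "c \<noteq> \<sigma>"
proof
  assume "c = \<sigma>"
  then have "(A - mat \<sigma>) *v z = 0"
    using assms(3) by (simp add: matrix_vector_mult_diff_rdistrib mat_matrix_vector_mult)
  moreover obtain M where "M ** (A - mat \<sigma>) = mat 1"
    using assms(1) unfolding invertible_def by blast
  ultimately have "z = 0"
    by (metis matrix_vector_mul_assoc matrix_vector_mul_lid matrix_vector_mult_0_right)
  with assms(2) show False ..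
qed

lemma matrix_mult_eigenvector_columns:
  fixes A :: "'a::field^'n^'n" and Z :: "'a^'k^'n"
  assumes "\<And>j. A *v column j Z = ev j *s column j Z"
  shows "((A - mat \<sigma>) ** Z) *v e = Z *v (\<chi> j. (ev j - \<sigma>) * e $ j)"
proof -
  have entry: "((A - mat \<sigma>) ** Z) $ p $ j = (ev j - \<sigma>) * Z $ p $ j" for p j
  proof -
    have "((A - mat \<sigma>) ** Z) $ p $ j
        = (\<Sum>k\<in>UNIV. A $ p $ k * Z $ k $ j - (if k = p then \<sigma> * Z $ k $ j else 0))"
      unfolding matrix_matrix_mult_def mat_def by (auto intro!: sum.cong simp: left_diff_distrib)
    also have "\<dots> = (A *v column j Z) $ p - \<sigma> * Z $ p $ j"
      by (simp add: sum_subtractf matrix_vector_mult_def column_def)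
    finally have "((A - mat \<sigma>) ** Z) $ p $ j = (A *v column j Z) $ p - \<sigma> * Z $ p $ j" .
    then show ?thesis
      by (simp only: assms) (simp add: column_def algebra_simps)
  qed
  show ?thesis
    by (simp add: vec_eq_iff matrix_vector_mult_def entry algebra_simps)
qed

lemma range_shifted_eigenvector_columns:
  fixes A :: "'a::field^'n^'n" and Z :: "'a^'k^'n"
  assumes eig: "\<And>j. eigenvector A (column j Z)" and inv: "invertible (A - mat \<sigma>)"
  shows "range (\<lambda>e. ((A - mat \<sigma>) ** Z) *v e) = range (\<lambda>e. Z *v e)"
proof -
  obtain ev where ev: "\<And>j. A *v column j Z = ev j *s column j Z"
    using eig unfolding eigenvector_def by metis
  have "ev j \<noteq> \<sigma>" for j
    using invertible_shift_not_eigenvalue[OF inv _ ev] eig unfolding eigenvector_def by blast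
  then have "Z *v e = ((A - mat \<sigma>) ** Z) *v (\<chi> j. e $ j / (ev j - \<sigma>))" for e
    unfolding matrix_mult_eigenvector_columns[OF ev] by (simp add: vec_eq_iff)
  then show ?thesis
    unfolding matrix_mult_eigenvector_columns[OF ev] by blast
qed

lemma minres_coeff_best_approximation:
  fixes A :: "'a::{real_normed_field,real_inner}^'n^'n" and Z :: "'a^'k^'n"
  assumes "\<And>j. eigenvector A (column j Z)" and "invertible (A - mat \<sigma>)"
    and "minres_coeff A \<sigma> Z r0 d"
  shows "((A - mat \<sigma>) ** Z) *v d \<in> range (\<lambda>e. Z *v e)"
    and "\<forall>z\<in>range (\<lambda>e. Z *v e). norm (r0 - ((A - mat \<sigma>) ** Z) *v d) \<le> norm (r0 - z)"
proof -
  note range_eq = range_shifted_eigenvector_columns[OF assms(1,2)]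
  show "((A - mat \<sigma>) ** Z) *v d \<in> range (\<lambda>e. Z *v e)"
    unfolding range_eq[symmetric] by blast
  show "\<forall>z\<in>range (\<lambda>e. Z *v e). norm (r0 - ((A - mat \<sigma>) ** Z) *v d) \<le> norm (r0 - z)"
    using assms(3) unfolding range_eq[symmetric] minres_coeff_def by blast
qed

theorem theorem4p1:
  fixes A :: "'a::{real_normed_field,real_inner}^'n^'n"
    and ns :: nat
    and \<sigma> \<beta> :: "nat \<Rightarrow> 'a"
    and b :: "'a^'n"
    and x0 :: "nat \<Rightarrow> 'a^'n"
    and r0 r :: "nat \<Rightarrow> 'a^'n"
    and Z :: "'a^'k^'n"
    and d :: "nat \<Rightarrow> 'a^'k"
  assumes nonsing: "\<And>i. i \<in> {1..ns} \<Longrightarrow> invertible (A - mat (\<sigma> i))"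
    and r0_def: "\<And>i. i \<in> {1..ns} \<Longrightarrow> r0 i = b - (A - mat (\<sigma> i)) *v x0 i"
    and beta1: "\<beta> 1 = 1"
    and r0_par: "\<And>i. i \<in> {1..ns} \<Longrightarrow> r0 i = \<beta> i *s r0 1"
    and eig: "\<And>j. eigenvector A (column j Z)"
    and minres: "\<And>i. i \<in> {1..ns} \<Longrightarrow> minres_coeff A (\<sigma> i) Z (r0 i) (d i)"
    and r_def: "\<And>i. i \<in> {1..ns} \<Longrightarrow> r i = r0 i - ((A - mat (\<sigma> i)) ** Z) *v d i"
  shows "\<forall>i\<in>{1..ns}. \<forall>j\<in>{1..ns}. parallel (r i) (r j)"
proof -
  define S where "S = range (\<lambda>e. Z *v e)"
  define w where "w i = ((A - mat (\<sigma> i)) ** Z) *v d i" for i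
  have "convex S"
    unfolding S_def by (intro convex_linear_image convex_UNIV matrix_vector_mul_linear)
  have cone: "c *s z \<in> S" if "z \<in> S" for c z
  proof -
    obtain e where "z = Z *v e" using \<open>z \<in> S\<close> unfolding S_def by blast
    then have "c *s z = Z *v (c *s e)" by (simp add: vector_scalar_commute)
    then show ?thesis unfolding S_def by blast
  qed
  have best: "w i \<in> S" "\<forall>z\<in>S. norm (r0 i - w i) \<le> norm (r0 i - z)" if "i \<in> {1..ns}" for i
    using minres_coeff_best_approximation[OF eig nonsing[OF that] minres[OF that]]
    unfolding S_def w_def by simp_all
  have scaled: "r i = \<beta> i *s r 1" if i: "i \<in> {1..ns}" for i
  proof -
    have one: "1 \<in> {1..ns}" using i by simp
    have "w i = \<beta> i *s w 1"
    proof (rule best_approximation_unique[OF \<open>convex S\<close> best(1)[OF i] cone[OF best(1)[OF one]]])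
      show "\<forall>z\<in>S. norm (r0 i - w i) \<le> norm (r0 i - z)"
        using best(2)[OF i] .
      show "\<forall>z\<in>S. norm (r0 i - \<beta> i *s w 1) \<le> norm (r0 i - z)"
        using best_approximation_scalar_mult[OF cone best(2)[OF one]] by (simp add: r0_par[OF i])
    qed
    then show ?thesis
      using r_def[OF i] r_def[OF one] r0_par[OF i] unfolding w_def
      by (simp add: vector_ssub_ldistrib)
  qed
  show ?thesis
  proof (intro ballI)
    fix i j assume "i \<in> {1..ns}" "j \<in> {1..ns}"
    then show "parallel (r i) (r j)"
      by (simp only: scaled parallel_scalar_mult)
  qed
qed

end
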